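(* Let $G=(V,E)$ be a connected edge-transitive graph that is not vertex-transitive, with minimum degree $\delta$ and maximum degree $\Delta$. If $\delta\geq 4$, or $\delta=3$ and $\Delta\geq 6$, then $|E|>2|V|-3$. If $\delta\leq 3$ and $\Delta\leq 5$, then either $|E|\leq 2|V|-3$, or $G$ is isomorphic to one of $K_{3,4}$, $K_{3,5}$, $H_{6,10}$.
   Context: All graphs are finite and simple. Vertex-transitive / edge-transitive: the automorphism group acts transitively on vertices / edges. $K_{a,b}$ is the complete bipartite graph. $H_{6,10}$ is the bipartite graph on vertex set $\{0,\dots,15\}$ with parts $\{0,\dots,5\}$ and $\{6,\dots,15\}$ and adjacency: $0:\{6,8,9,10,15\}$, $1:\{7,9,10,12,13\}$, $2:\{6,8,11,12,13\}$, $3:\{6,7,10,11,14\}$, $4:\{9,11,12,14,15\}$, $5:\{7,8,13,14,15\}$. *)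

theory Defs
  imports Main
begin

definition simple_graph :: "'a set \<Rightarrow> ('a \<Rightarrow> 'a \<Rightarrow> bool) \<Rightarrow> bool" where
  "simple_graph V E \<longleftrightarrow> finite V \<and> (\<forall>u v. E u v \<longrightarrow> u \<in> V \<and> v \<in> V)
     \<and> (\<forall>u v. E u v \<longrightarrow> E v u) \<and> (\<forall>u. \<not> E u u)"

definition edges :: "'a set \<Rightarrow> ('a \<Rightarrow> 'a \<Rightarrow> bool) \<Rightarrow> 'a set set" where
  "edges V E = {{u, v} | u v. u \<in> V \<and> v \<in> V \<and> E u v}"

definition degree :: "'a set \<Rightarrow> ('a \<Rightarrow> 'a \<Rightarrow> bool) \<Rightarrow> 'a \<Rightarrow> nat" where
  "degree V E v = card {u \<in> V. E v u}"

definition min_degree :: "'a set \<Rightarrow> ('a \<Rightarrow> 'a \<Rightarrow> bool) \<Rightarrow> nat" where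
  "min_degree V E = Min (degree V E ` V)"

definition max_degree :: "'a set \<Rightarrow> ('a \<Rightarrow> 'a \<Rightarrow> bool) \<Rightarrow> nat" where
  "max_degree V E = Max (degree V E ` V)"

definition connected_graph :: "'a set \<Rightarrow> ('a \<Rightarrow> 'a \<Rightarrow> bool) \<Rightarrow> bool" where
  "connected_graph V E \<longleftrightarrow> V \<noteq> {} \<and> (\<forall>u\<in>V. \<forall>v\<in>V. E\<^sup>*\<^sup>* u v)"

definition automorphism :: "'a set \<Rightarrow> ('a \<Rightarrow> 'a \<Rightarrow> bool) \<Rightarrow> ('a \<Rightarrow> 'a) \<Rightarrow> bool" where
  "automorphism V E f \<longleftrightarrow> bij_betw f V V \<and> (\<forall>u\<in>V. \<forall>v\<in>V. E u v \<longleftrightarrow> E (f u) (f v))"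

definition vertex_transitive :: "'a set \<Rightarrow> ('a \<Rightarrow> 'a \<Rightarrow> bool) \<Rightarrow> bool" where
  "vertex_transitive V E \<longleftrightarrow> (\<forall>u\<in>V. \<forall>v\<in>V. \<exists>f. automorphism V E f \<and> f u = v)"

definition edge_transitive :: "'a set \<Rightarrow> ('a \<Rightarrow> 'a \<Rightarrow> bool) \<Rightarrow> bool" where
  "edge_transitive V E \<longleftrightarrow> (\<forall>e\<in>edges V E. \<forall>e'\<in>edges V E.
      \<exists>f. automorphism V E f \<and> f ` e = e')"

definition graph_iso :: "'a set \<Rightarrow> ('a \<Rightarrow> 'a \<Rightarrow> bool) \<Rightarrow> 'b set \<Rightarrow> ('b \<Rightarrow> 'b \<Rightarrow> bool) \<Rightarrow> bool" where
  "graph_iso V E V' E' \<longleftrightarrow> (\<exists>f. bij_betw f V V' \<and> (\<forall>u\<in>V. \<forall>v\<in>V. E u v \<longleftrightarrow> E' (f u) (f v)))"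

definition K_bip_V :: "nat \<Rightarrow> nat \<Rightarrow> nat set" where
  "K_bip_V a b = {0..<a+b}"

definition K_bip_E :: "nat \<Rightarrow> nat \<Rightarrow> nat \<Rightarrow> nat \<Rightarrow> bool" where
  "K_bip_E a b u v \<longleftrightarrow> u < a+b \<and> v < a+b \<and> ((u < a \<and> a \<le> v) \<or> (v < a \<and> a \<le> u))"

definition H610_V :: "nat set" where
  "H610_V = {0..<16}"

definition H610_nbr :: "nat \<Rightarrow> nat set" where
  "H610_nbr i = (if i = 0 then {6,8,9,10,15}
     else if i = 1 then {7,9,10,12,13}
     else if i = 2 then {6,8,11,12,13}
     else if i = 3 then {6,7,10,11,14}
     else if i = 4 then {9,11,12,14,15}
     else if i = 5 then {7,8,13,14,15}
     else {})"

definition H610_E :: "nat \<Rightarrow> nat \<Rightarrow> bool" where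
  "H610_E u v \<longleftrightarrow> (u \<le> 5 \<and> v \<in> H610_nbr u) \<or> (v \<le> 5 \<and> u \<in> H610_nbr v)"

end

(*
  The automorphism group of G has exactly two orbits A and B on the vertices; every edge joins
  them, and the group acts transitively on the edges oriented from A to B.  So G is bipartite
  and biregular with degrees dA <= dB and |E| = |A| dA = |B| dB, and the edge bound is a matter
  of arithmetic except for (dA, dB, |A|, |B|) = (3, 4, 4, 3), (3, 5, 5, 3), (3, 5, 10, 6).  In
  the first two cases dB = |A| and G is complete bipartite.  In the last one, flag-transitivity
  forces any two vertices of B to have exactly two common neighbours, so the neighbourhoods of
  the vertices of A are the blocks of a 2-(6,3,2) design on B.  Summing (k - 1) (k - 2), with
  k = |N a \<inter> S|, over a \<in> A shows that for each 3-subset S of B exactly one block equals S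
  or B - S.  Once three blocks are fixed by a suitable labelling of B, these counts determine
  all ten blocks, and they are the blocks of H_{6,10}.
*)
theory Submission
  imports Defs
begin

lemma simple_graphD:
  assumes "simple_graph V E"
  shows "finite V" and "E u v \<Longrightarrow> u \<in> V" and "E u v \<Longrightarrow> v \<in> V"
    and "E u v \<Longrightarrow> E v u" and "\<not> E u u"
  using assms unfolding simple_graph_def by auto

lemma automorphism_id: "automorphism V E id"
  by (simp add: automorphism_def)

lemma automorphism_in: "automorphism V E f \<Longrightarrow> v \<in> V \<Longrightarrow> f v \<in> V"
  unfolding automorphism_def by (meson bij_betw_apply)

lemma automorphism_adj:
  "automorphism V E f \<Longrightarrow> u \<in> V \<Longrightarrow> v \<in> V \<Longrightarrow> E (f u) (f v) \<longleftrightarrow> E u v"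
  by (simp add: automorphism_def)

lemma automorphism_comp:
  assumes f: "automorphism V E f" and g: "automorphism V E g"
  shows "automorphism V E (f \<circ> g)"
proof -
  have "E u v \<longleftrightarrow> E (f (g u)) (f (g v))" if "u \<in> V" "v \<in> V" for u v
    using automorphism_adj[OF f] automorphism_adj[OF g] automorphism_in[OF g] that by simp
  with f g bij_betw_trans show ?thesis unfolding automorphism_def by fastforce
qed

lemma automorphism_inv_into:
  assumes f: "automorphism V E f"
  shows "automorphism V E (inv_into V f)"
proof -
  have bij: "bij_betw f V V" using f by (simp add: automorphism_def)
  have "E u v \<longleftrightarrow> E (inv_into V f u) (inv_into V f v)" if "u \<in> V" "v \<in> V" for u v
    using automorphism_adj[OF f] bij_betw_inv_into_right[OF bij] that
      bij_betw_apply[OF bij_betw_inv_into[OF bij]] by metis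
  with bij_betw_inv_into[OF bij] show ?thesis unfolding automorphism_def by blast
qed

lemma automorphism_inv_into_f_f: "automorphism V E f \<Longrightarrow> v \<in> V \<Longrightarrow> inv_into V f (f v) = v"
  unfolding automorphism_def by (meson bij_betw_imp_inj_on inv_into_f_f)

definition orbit :: "'a set \<Rightarrow> ('a \<Rightarrow> 'a \<Rightarrow> bool) \<Rightarrow> 'a \<Rightarrow> 'a set" where
  "orbit V E v = {f v | f. automorphism V E f}"

lemma orbit_iff: "w \<in> orbit V E v \<longleftrightarrow> (\<exists>f. automorphism V E f \<and> f v = w)"
  unfolding orbit_def by blast

lemma orbit_self: "v \<in> orbit V E v"
  unfolding orbit_iff using automorphism_id by (metis id_apply)

lemma orbit_subset: "v \<in> V \<Longrightarrow> orbit V E v \<subseteq> V"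
  using automorphism_in by (auto simp: orbit_iff)

lemma orbit_closed:
  assumes f: "automorphism V E f" and w: "w \<in> orbit V E v"
  shows "f w \<in> orbit V E v"
proof -
  obtain g where "automorphism V E g" "g v = w" using w unfolding orbit_iff by blast
  then have "automorphism V E (f \<circ> g) \<and> (f \<circ> g) v = f w" using automorphism_comp[OF f] by simp
  then show ?thesis unfolding orbit_iff by blast
qed

lemma orbit_mono:
  assumes "w \<in> orbit V E v"
  shows "orbit V E w \<subseteq> orbit V E v"
proof
  fix x assume "x \<in> orbit V E w"
  then obtain f where f: "automorphism V E f" "f w = x" unfolding orbit_iff by blast
  show "x \<in> orbit V E v" using orbit_closed[OF f(1) assms] f(2) by simp
qed

lemma orbit_eq:
  assumes v: "v \<in> V" and w: "w \<in> orbit V E v"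
  shows "orbit V E w = orbit V E v"
proof -
  obtain f where f: "automorphism V E f" "f v = w" using w unfolding orbit_iff by blast
  have "automorphism V E (inv_into V f) \<and> inv_into V f w = v"
    using automorphism_inv_into[OF f(1)] automorphism_inv_into_f_f[OF f(1) v] f(2) by simp
  then have "v \<in> orbit V E w" unfolding orbit_iff by blast
  with w show ?thesis by (intro equalityI orbit_mono)
qed

lemma vertex_transitiveI_orbit:
  assumes v: "v \<in> V" and V: "V \<subseteq> orbit V E v"
  shows "vertex_transitive V E"
  unfolding vertex_transitive_def
proof (intro ballI)
  fix u w assume "u \<in> V" "w \<in> V"
  then have "w \<in> orbit V E u" using orbit_eq[OF v, of u] V by blast
  then show "\<exists>f. automorphism V E f \<and> f u = w" unfolding orbit_iff .
qed

definition neighbours :: "'a set \<Rightarrow> ('a \<Rightarrow> 'a \<Rightarrow> bool) \<Rightarrow> 'a \<Rightarrow> 'a set" where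
  "neighbours V E v = {u \<in> V. E v u}"

definition codegree :: "'a set \<Rightarrow> ('a \<Rightarrow> 'a \<Rightarrow> bool) \<Rightarrow> 'a \<Rightarrow> 'a \<Rightarrow> nat" where
  "codegree V E u v = card (neighbours V E u \<inter> neighbours V E v)"

lemma degree_eq_card_neighbours: "degree V E v = card (neighbours V E v)"
  by (simp add: degree_def neighbours_def)

lemma neighbours_automorphism:
  assumes f: "automorphism V E f" and v: "v \<in> V"
  shows "f ` neighbours V E v = neighbours V E (f v)"
proof
  show "f ` neighbours V E v \<subseteq> neighbours V E (f v)"
    using automorphism_in[OF f] automorphism_adj[OF f] v unfolding neighbours_def by auto
  show "neighbours V E (f v) \<subseteq> f ` neighbours V E v"
  proof
    fix u assume u: "u \<in> neighbours V E (f v)"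
    then obtain w where "w \<in> V" "u = f w"
      using f unfolding automorphism_def neighbours_def by (metis bij_betw_imp_surj_on imageE mem_Collect_eq)
    with u show "u \<in> f ` neighbours V E v"
      using automorphism_adj[OF f] v unfolding neighbours_def by auto
  qed
qed

lemma inj_on_automorphism: "automorphism V E f \<Longrightarrow> S \<subseteq> V \<Longrightarrow> inj_on f S"
  unfolding automorphism_def by (meson bij_betw_imp_inj_on inj_on_subset)

lemma degree_automorphism:
  assumes "automorphism V E f" "v \<in> V"
  shows "degree V E (f v) = degree V E v"
  using neighbours_automorphism[OF assms] inj_on_automorphism[OF assms(1)] card_image
  unfolding degree_eq_card_neighbours neighbours_def by (metis (no_types, lifting) mem_Collect_eq subsetI)

lemma codegree_automorphism:
  assumes f: "automorphism V E f" and "u \<in> V" "v \<in> V"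
  shows "codegree V E (f u) (f v) = codegree V E u v"
proof -
  have sub: "neighbours V E w \<subseteq> V" for w by (auto simp: neighbours_def)
  have "neighbours V E (f u) \<inter> neighbours V E (f v) = f ` (neighbours V E u \<inter> neighbours V E v)"
    using neighbours_automorphism[OF f] assms(2,3) inj_on_image_Int[OF inj_on_automorphism[OF f order_refl] sub sub]
    by simp
  then show ?thesis
    unfolding codegree_def using card_image inj_on_automorphism[OF f] sub by (metis le_infI1)
qed

lemma edge_transitiveD:
  assumes "simple_graph V E" "edge_transitive V E" "E a b" "E x y"
  obtains f where "automorphism V E f" "f a = x \<and> f b = y \<or> f a = y \<and> f b = x"
proof -
  have "{a, b} \<in> edges V E" "{x, y} \<in> edges V E"
    using assms(1,3,4) simple_graphD[OF assms(1)] unfolding edges_def by blast+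
  then obtain f where "automorphism V E f" "f ` {a, b} = {x, y}"
    using assms(2) unfolding edge_transitive_def by blast
  then show ?thesis using that by (auto simp: doubleton_eq_iff)
qed

lemma connected_graph_neighbour:
  assumes "connected_graph V E" "u \<in> V" "v \<in> V" "u \<noteq> v"
  obtains w where "E u w"
proof -
  have "E\<^sup>*\<^sup>* u v" using assms unfolding connected_graph_def by blast
  then show ?thesis using assms(4) that by (cases rule: converse_rtranclpE) auto
qed

lemma connected_graph_neighbour_of_edge:
  assumes "simple_graph V E" "connected_graph V E" "E a b" "x \<in> V"
  obtains y where "E x y"
proof (cases "x = a")
  case True
  with assms(3) that show ?thesis by blast
next
  case False
  have "a \<in> V" using simple_graphD(2)[OF assms(1,3)] .
  with False assms(2,4) that show ?thesis by (metis connected_graph_neighbour)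
qed

lemma connected_graph_closed_subset:
  assumes "connected_graph V E" "x \<in> V" "x \<in> C" "\<And>u v. u \<in> C \<Longrightarrow> E u v \<Longrightarrow> v \<in> C"
  shows "V \<subseteq> C"
proof
  fix v assume "v \<in> V"
  then have "E\<^sup>*\<^sup>* x v" using assms(1,2) unfolding connected_graph_def by blast
  then show "v \<in> C" by induction (use assms(3,4) in blast)+
qed

definition bipartition :: "'a set \<Rightarrow> ('a \<Rightarrow> 'a \<Rightarrow> bool) \<Rightarrow> 'a set \<Rightarrow> 'a set \<Rightarrow> bool" where
  "bipartition V E A B \<longleftrightarrow> V = A \<union> B \<and> A \<inter> B = {} \<and>
     (\<forall>u v. E u v \<longrightarrow> u \<in> A \<and> v \<in> B \<or> u \<in> B \<and> v \<in> A)"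

lemma bipartition_swap: "bipartition V E A B \<Longrightarrow> bipartition V E B A"
  unfolding bipartition_def by blast

lemma graph_iso_of_bipartitions:
  assumes G: "bipartition V E A B" "symp E" and G': "bipartition V' E' A' B'" "symp E'"
    and g: "bij_betw g A' A" and h: "bij_betw h B' B"
    and adj: "\<And>a b. a \<in> A' \<Longrightarrow> b \<in> B' \<Longrightarrow> E (g a) (h b) \<longleftrightarrow> E' a b"
  shows "graph_iso V E V' E'"
proof -
  define \<psi> where "\<psi> x = (if x \<in> A' then g x else h x)" for x
  have disj: "A' \<inter> B' = {}" "A \<inter> B = {}" using G(1) G'(1) by (simp_all add: bipartition_def)
  then have "bij_betw \<psi> (A' \<union> B') (A \<union> B)"
    unfolding \<psi>_def by (rule bij_betw_disjoint_Un[OF g h])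
  then have \<psi>: "bij_betw \<psi> V' V" using G G' by (simp add: bipartition_def)
  have adj\<psi>: "E (\<psi> x) (\<psi> y) \<longleftrightarrow> E' x y" if "x \<in> V'" "y \<in> V'" for x y
  proof -
    have "\<psi> ` A' \<subseteq> A" "\<psi> ` B' \<subseteq> B" using g h disj(1) unfolding \<psi>_def bij_betw_def by auto
    then show ?thesis
      using that G G' adj[of x y] adj[of y x] unfolding \<psi>_def bipartition_def symp_def
      by (smt (verit) disjoint_iff image_subset_iff UnE)
  qed
  have "E u v \<longleftrightarrow> E' (inv_into V' \<psi> u) (inv_into V' \<psi> v)" if "u \<in> V" "v \<in> V" for u v
  proof -
    have "inv_into V' \<psi> u \<in> V'" "inv_into V' \<psi> v \<in> V'"
      using that bij_betw_apply[OF bij_betw_inv_into[OF \<psi>]] by blast+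
    moreover have "\<psi> (inv_into V' \<psi> u) = u" "\<psi> (inv_into V' \<psi> v) = v"
      using that bij_betw_inv_into_right[OF \<psi>] by blast+
    ultimately show ?thesis using adj\<psi> by metis
  qed
  then show ?thesis
    unfolding graph_iso_def using bij_betw_inv_into[OF \<psi>] by blast
qed

section \<open>Edge-transitive graphs that are not vertex-transitive\<close>

lemma edge_transitive_orbit_bipartition:
  assumes simple: "simple_graph V E" and conn: "connected_graph V E"
    and et: "edge_transitive V E" and nvt: "\<not> vertex_transitive V E" and ab: "E a b"
  shows "bipartition V E (orbit V E a) (orbit V E b)"
proof -
  have a: "a \<in> V" and b: "b \<in> V" using simple_graphD(2,3)[OF simple ab] by auto
  have ends: "x \<in> orbit V E a \<and> y \<in> orbit V E b \<or> x \<in> orbit V E b \<and> y \<in> orbit V E a"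
    if "E x y" for x y
    using edge_transitiveD[OF simple et ab that] unfolding orbit_iff by metis
  have cover: "V \<subseteq> orbit V E a \<union> orbit V E b"
    using connected_graph_neighbour_of_edge[OF simple conn ab] ends by blast
  have "orbit V E a \<inter> orbit V E b = {}"
  proof (rule ccontr)
    assume "orbit V E a \<inter> orbit V E b \<noteq> {}"
    then obtain w where "w \<in> orbit V E a" "w \<in> orbit V E b" by blast
    then have "orbit V E b = orbit V E a" using orbit_eq a b by metis
    with cover have "vertex_transitive V E" using vertex_transitiveI_orbit[OF a] by simp
    with nvt show False ..
  qed
  with cover orbit_subset[OF a] orbit_subset[OF b] ends show ?thesis
    unfolding bipartition_def by blast
qed

lemma edge_transitive_orbit_flag:
  assumes simple: "simple_graph V E" and et: "edge_transitive V E" and ab: "E a b"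
    and bip: "bipartition V E (orbit V E a) (orbit V E b)"
    and x: "x \<in> orbit V E a" and xy: "E x y"
  obtains f where "automorphism V E f" "f a = x" "f b = y"
proof -
  obtain f where f: "automorphism V E f" "f a = x \<and> f b = y \<or> f a = y \<and> f b = x"
    using edge_transitiveD[OF simple et ab xy] by blast
  have "y \<notin> orbit V E a" using bip x xy unfolding bipartition_def by blast
  then have "f a \<noteq> y" using orbit_closed[OF f(1) orbit_self] by metis
  with f that show ?thesis by blast
qed

lemma edge_transitive_orbit_flags:
  assumes simple: "simple_graph V E" and et: "edge_transitive V E" and ab: "E a b"
    and bip: "bipartition V E (orbit V E a) (orbit V E b)"
    and x: "x \<in> orbit V E a" "E x y" and x': "x' \<in> orbit V E a" "E x' y'"
  shows "\<exists>f. automorphism V E f \<and> f x = x' \<and> f y = y'"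
proof -
  obtain f where f: "automorphism V E f" "f a = x" "f b = y"
    using edge_transitive_orbit_flag[OF simple et ab bip x] .
  obtain g where g: "automorphism V E g" "g a = x'" "g b = y'"
    using edge_transitive_orbit_flag[OF simple et ab bip x'] .
  have "a \<in> V" "b \<in> V" using simple_graphD(2,3)[OF simple ab] by auto
  then have "(g \<circ> inv_into V f) x = x' \<and> (g \<circ> inv_into V f) y = y'"
    using automorphism_inv_into_f_f[OF f(1)] f(2,3) g(2,3) by auto
  moreover have "automorphism V E (g \<circ> inv_into V f)"
    using automorphism_comp[OF g(1) automorphism_inv_into[OF f(1)]] .
  ultimately show ?thesis by blast
qed

locale flag_transitive_bipartite =
  fixes V :: "'a set" and E :: "'a \<Rightarrow> 'a \<Rightarrow> bool" and A B :: "'a set" and dA dB :: nat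
  assumes simple: "simple_graph V E" and connected: "connected_graph V E"
    and bipartition: "bipartition V E A B"
    and A_nonempty: "A \<noteq> {}" and B_nonempty: "B \<noteq> {}"
    and degree_A: "\<And>a. a \<in> A \<Longrightarrow> degree V E a = dA"
    and degree_B: "\<And>b. b \<in> B \<Longrightarrow> degree V E b = dB"
    and flag_transitive: "\<And>a b a' b'. a \<in> A \<Longrightarrow> b \<in> B \<Longrightarrow> a' \<in> A \<Longrightarrow> b' \<in> B \<Longrightarrow>
      E a b \<Longrightarrow> E a' b' \<Longrightarrow> \<exists>f. automorphism V E f \<and> f a = a' \<and> f b = b'"

context flag_transitive_bipartite
begin

abbreviation N where "N \<equiv> neighbours V E"

lemma swap: "flag_transitive_bipartite V E B A dB dA"
proof
  show "\<exists>f. automorphism V E f \<and> f b = b' \<and> f a = a'"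
    if "b \<in> B" "a \<in> A" "b' \<in> B" "a' \<in> A" "E b a" "E b' a'" for a b a' b'
    using flag_transitive that simple_graphD(4)[OF simple] by blast
qed (use simple connected bipartition_swap[OF bipartition] A_nonempty B_nonempty degree_A degree_B in auto)

lemma V_eq: "V = A \<union> B" and A_B_disjoint: "A \<inter> B = {}"
  and adj_between: "E u v \<Longrightarrow> u \<in> A \<and> v \<in> B \<or> u \<in> B \<and> v \<in> A"
  using bipartition unfolding bipartition_def by blast+

lemma finite_A: "finite A" and finite_B: "finite B"
  using simple_graphD(1)[OF simple] V_eq by simp_all

lemma card_V: "card V = card A + card B"
  using V_eq A_B_disjoint finite_A finite_B card_Un_disjoint by metis

lemma adj_sym: "E u v \<Longrightarrow> E v u"
  using simple_graphD(4)[OF simple] .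

lemma neighbours_iff: "u \<in> N v \<longleftrightarrow> u \<in> V \<and> E v u"
  by (simp add: neighbours_def)

lemma mem_neighbours_sym: "u \<in> V \<Longrightarrow> v \<in> V \<Longrightarrow> u \<in> N v \<longleftrightarrow> v \<in> N u"
  using neighbours_iff adj_sym by blast

lemma neighbours_A: "a \<in> A \<Longrightarrow> N a \<subseteq> B"
  and neighbours_B: "b \<in> B \<Longrightarrow> N b \<subseteq> A"
  unfolding neighbours_def using adj_between A_B_disjoint by blast+

lemma neighbours_B_eq: "t \<in> B \<Longrightarrow> N t = {a \<in> A. t \<in> N a}"
  using neighbours_B mem_neighbours_sym V_eq by (auto simp: neighbours_def)

lemma finite_neighbours: "finite (N v)"
  using simple_graphD(1)[OF simple] by (simp add: neighbours_def)

lemma card_neighbours_A: "a \<in> A \<Longrightarrow> card (N a) = dA"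
  and card_neighbours_B: "b \<in> B \<Longrightarrow> card (N b) = dB"
  using degree_A degree_B degree_eq_card_neighbours by metis+

lemma dA_le_card_B: "dA \<le> card B"
  using A_nonempty card_neighbours_A neighbours_A card_mono[OF finite_B] by blast

lemma dB_le_card_A: "dB \<le> card A"
  using flag_transitive_bipartite.dA_le_card_B[OF swap] .

lemma dA_pos: "1 \<le> dA"
proof -
  obtain a b where a: "a \<in> A" and b: "b \<in> B" using A_nonempty B_nonempty by blast
  then obtain v where "E a v"
    using connected_graph_neighbour[OF connected] V_eq A_B_disjoint by blast
  then have "N a \<noteq> {}" using simple_graphD(3)[OF simple] neighbours_iff by blast
  then show ?thesis using card_neighbours_A[OF a] finite_neighbours
    by (metis One_nat_def Suc_leI card_gt_0_iff)
qed

lemma card_edges: "card (edges V E) = card A * dA"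
proof -
  let ?e = "\<lambda>(a, b). {a, b}"
  have "edges V E = ?e ` (SIGMA a:A. N a)"
  proof
    show "edges V E \<subseteq> ?e ` (SIGMA a:A. N a)"
    proof
      fix e assume "e \<in> edges V E"
      then obtain u v where uv: "e = {u, v}" "u \<in> V" "v \<in> V" "E u v" unfolding edges_def by blast
      then have "(u, v) \<in> (SIGMA a:A. N a) \<or> (v, u) \<in> (SIGMA a:A. N a)"
        using adj_between adj_sym neighbours_iff by blast
      then show "e \<in> ?e ` (SIGMA a:A. N a)" using uv(1) by (auto simp: insert_commute)
    qed
    show "?e ` (SIGMA a:A. N a) \<subseteq> edges V E"
      using V_eq unfolding edges_def neighbours_def by auto
  qed
  moreover have "inj_on ?e (SIGMA a:A. N a)"
    using neighbours_A A_B_disjoint by (fastforce simp: inj_on_def doubleton_eq_iff)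
  ultimately have "card (edges V E) = card (SIGMA a:A. N a)" by (simp add: card_image)
  also have "\<dots> = (\<Sum>a\<in>A. card (N a))" using finite_A finite_neighbours by simp
  also have "\<dots> = card A * dA" using card_neighbours_A by simp
  finally show ?thesis .
qed

lemma double_count_edges: "card A * dA = card B * dB"
  using card_edges flag_transitive_bipartite.card_edges[OF swap] by simp

lemma min_degree_eq: "min_degree V E = min dA dB"
  and max_degree_eq: "max_degree V E = max dA dB"
proof -
  have "degree V E ` V = {dA, dB}"
    using degree_A degree_B V_eq A_nonempty B_nonempty by auto
  then show "min_degree V E = min dA dB" "max_degree V E = max dA dB"
    unfolding min_degree_def max_degree_def by simp_all
qed

end

lemma flag_transitive_bipartite_exists:
  assumes simple: "simple_graph V E" and conn: "connected_graph V E"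
    and et: "edge_transitive V E" and nvt: "\<not> vertex_transitive V E"
  obtains A B dA dB where "flag_transitive_bipartite V E A B dA dB" "dA \<le> dB"
proof -
  obtain u v where "u \<in> V" "v \<in> V" "u \<noteq> v"
    using nvt automorphism_id unfolding vertex_transitive_def by (metis id_apply)
  then obtain w where uw: "E u w" using connected_graph_neighbour[OF conn] by metis
  have u: "u \<in> V" and w: "w \<in> V" using simple_graphD(2,3)[OF simple uw] by auto
  have bip: "bipartition V E (orbit V E u) (orbit V E w)"
    using edge_transitive_orbit_bipartition[OF assms uw] .
  have degree_orbit: "degree V E x = degree V E z" if "z \<in> V" "x \<in> orbit V E z" for x z
    using that degree_automorphism unfolding orbit_iff by metis
  have ftb: "flag_transitive_bipartite V E (orbit V E u) (orbit V E w) (degree V E u) (degree V E w)"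
  proof
    show "orbit V E u \<noteq> {}" "orbit V E w \<noteq> {}" using orbit_self by (metis empty_iff)+
  qed (use simple conn bip edge_transitive_orbit_flags[OF simple et uw bip] degree_orbit u w in auto)
  show ?thesis
  proof (cases "degree V E u \<le> degree V E w")
    case True
    with ftb that show ?thesis by blast
  next
    case False
    with flag_transitive_bipartite.swap[OF ftb] that show ?thesis by simp
  qed
qed

lemma dense_biregular_edge_count:
  fixes m n d e :: nat
  assumes count: "m * d = n * e" and "d \<le> e" and dense: "4 \<le> d \<or> d = 3 \<and> 6 \<le> e"
  shows "2 * int (m + n) - 3 < int (m * d)"
  using dense
proof
  assume d: "4 \<le> d"
  have "n * d \<le> m * d" using count \<open>d \<le> e\<close> by (metis mult_le_mono2)
  then have "2 * (m + n) \<le> 4 * m" using d by simp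
  also have "\<dots> \<le> m * d" using d by simp
  finally show ?thesis by linarith
next
  assume d: "d = 3 \<and> 6 \<le> e"
  then have "n * 6 \<le> m * 3" using count by (metis mult_le_mono2)
  with d show ?thesis by simp
qed

lemma sparse_biregular_edge_count:
  fixes m n d e :: nat
  assumes count: "m * d = n * e" and "1 \<le> d" "d \<le> e" "d \<le> 3" "e \<le> 5" "d \<le> n" "e \<le> m"
  shows "int (m * d) \<le> 2 * int (m + n) - 3
    \<or> (d, e, m, n) \<in> {(3, 4, 4, 3), (3, 5, 5, 3), (3, 5, 10, 6)}"
proof -
  consider "d = 1" | "d = 2" | "d = 3" "e = 3" | "d = 3" "e = 4" | "d = 3" "e = 5"
    using assms by linarith
  then show ?thesis
  proof cases
    case 1
    with assms(3,6,7) show ?thesis by simp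
  next
    case 2
    with assms(3,6,7) show ?thesis by simp
  next
    case 3
    with count \<open>e \<le> m\<close> show ?thesis by simp
  next
    case 4
    with count \<open>e \<le> m\<close> show ?thesis by simp presburger
  next
    case 5
    with count \<open>e \<le> m\<close> show ?thesis by simp presburger
  qed
qed

lemma bipartition_K_bip: "bipartition (K_bip_V p q) (K_bip_E p q) {p..<p+q} {0..<p}"
  unfolding bipartition_def K_bip_V_def K_bip_E_def by auto

lemma symp_K_bip: "symp (K_bip_E p q)"
  unfolding symp_def K_bip_E_def by auto

context flag_transitive_bipartite
begin

lemma complete_bipartite_iso:
  assumes "dB = card A"
  shows "graph_iso V E (K_bip_V (card B) (card A)) (K_bip_E (card B) (card A))"
proof -
  obtain g where g: "bij_betw g {card B..<card B + card A} A"
    using finite_same_card_bij[OF _ finite_A] by (metis card_atLeastLessThan diff_add_inverse finite_atLeastLessThan)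
  obtain h where h: "bij_betw h {0..<card B} B"
    using finite_same_card_bij[OF _ finite_B] by (metis card_atLeastLessThan finite_atLeastLessThan minus_nat.diff_0)
  have "N b = A" if "b \<in> B" for b
    using card_subset_eq[OF finite_A neighbours_B[OF that]] card_neighbours_B[OF that] assms by simp
  then have "E (g i) (h j)" if "i \<in> {card B..<card B + card A}" "j \<in> {0..<card B}" for i j
    using that bij_betw_apply[OF g] bij_betw_apply[OF h] neighbours_iff adj_sym by metis
  then show ?thesis
    using graph_iso_of_bipartitions[OF bipartition _ bipartition_K_bip symp_K_bip g h] adj_sym
    unfolding K_bip_E_def symp_def by auto
qed

end

section \<open>Double counting in flag-transitive bipartite graphs\<close>

lemma sum_card_filter_swap:
  assumes "finite S" "finite T"
  shows "(\<Sum>s\<in>S. card {t \<in> T. R s t}) = (\<Sum>t\<in>T. card {s \<in> S. R s t})"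
proof -
  have "card {t \<in> T. R s t} = (\<Sum>t\<in>T. of_bool (R s t))" for s
    using assms(2) by (simp add: Int_def conj_commute)
  moreover have "card {s \<in> S. R s t} = (\<Sum>s\<in>S. of_bool (R s t))" for t
    using assms(1) by (simp add: Int_def conj_commute)
  ultimately show ?thesis using sum.swap by simp
qed

context flag_transitive_bipartite
begin

lemma card_codegree_filter_invariant:
  assumes x: "x \<in> B" and a: "a \<in> N x" and a': "a' \<in> N x"
  shows "card {y \<in> N a - {x}. P (codegree V E x y)} = card {y \<in> N a' - {x}. P (codegree V E x y)}"
proof -
  have aA: "a \<in> A" "a' \<in> A" using a a' neighbours_B[OF x] by auto
  have xV: "x \<in> V" and aV: "a \<in> V" using x aA V_eq by auto
  have "E a x" "E a' x" using a a' neighbours_iff adj_sym by blast+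
  then obtain f where f: "automorphism V E f" "f a = a'" "f x = x"
    using flag_transitive[OF aA(1) x aA(2) x] by blast
  have sub: "N a - {x} \<subseteq> V" by (auto simp: neighbours_def)
  have "f ` (N a - {x}) = f ` N a - f ` {x}"
    using xV by (intro inj_on_image_set_diff[OF inj_on_automorphism[OF f(1) order_refl]])
      (auto simp: neighbours_def)
  also have "\<dots> = N a' - {x}" using neighbours_automorphism[OF f(1) aV] f(2,3) by simp
  finally have img: "f ` (N a - {x}) = N a' - {x}" .
  have codegree_f: "codegree V E x (f y) = codegree V E x y" if "y \<in> N a - {x}" for y
    using codegree_automorphism[OF f(1) xV] sub that f(3) by (metis subsetD)
  have eq: "{y \<in> N a' - {x}. P (codegree V E x y)} = f ` {y \<in> N a - {x}. P (codegree V E x y)}"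
  proof (intro equalityI subsetI)
    fix y assume y: "y \<in> {y \<in> N a' - {x}. P (codegree V E x y)}"
    then obtain z where "z \<in> N a - {x}" "y = f z" using img by blast
    with y codegree_f show "y \<in> f ` {y \<in> N a - {x}. P (codegree V E x y)}" by auto
  qed (use img codegree_f in auto)
  have "inj_on f {y \<in> N a - {x}. P (codegree V E x y)}"
    by (rule inj_on_automorphism[OF f(1)]) (use sub in blast)
  then show ?thesis unfolding eq by (rule card_image[symmetric])
qed

lemma sum_codegree_filter:
  assumes x: "x \<in> B"
  shows "(\<Sum>a\<in>N x. card {y \<in> N a - {x}. P (codegree V E x y)})
       = (\<Sum>y\<in>{y \<in> B - {x}. P (codegree V E x y)}. codegree V E x y)"
proof -
  define T where "T = {y \<in> B - {x}. P (codegree V E x y)}"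
  have "{y \<in> N a - {x}. P (codegree V E x y)} = {y \<in> T. E a y}" if "a \<in> N x" for a
    using that neighbours_B[OF x] neighbours_A V_eq unfolding T_def neighbours_def by blast
  moreover have "{a \<in> N x. E a y} = N x \<inter> N y" if "y \<in> T" for y
    using that V_eq adj_sym unfolding T_def neighbours_def by blast
  ultimately show ?thesis
    using sum_card_filter_swap[OF finite_neighbours, of T] finite_B
    unfolding T_def codegree_def by simp
qed

lemma codegree_count:
  assumes x: "x \<in> B" and a: "a \<in> N x"
  shows "s * card {y \<in> B - {x}. codegree V E x y = s} = dB * card {y \<in> N a - {x}. codegree V E x y = s}"
proof -
  have "s * card {y \<in> B - {x}. codegree V E x y = s}
      = (\<Sum>y\<in>{y \<in> B - {x}. codegree V E x y = s}. codegree V E x y)" by simp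
  also have "\<dots> = (\<Sum>a'\<in>N x. card {y \<in> N a' - {x}. codegree V E x y = s})"
    by (rule sum_codegree_filter[OF x, symmetric])
  also have "\<dots> = (\<Sum>a'\<in>N x. card {y \<in> N a - {x}. codegree V E x y = s})"
    using card_codegree_filter_invariant[OF x _ a] by (intro sum.cong) auto
  finally show ?thesis using card_neighbours_B[OF x] by simp
qed

lemma neighbours_eq_if_codegree_eq:
  assumes "x \<in> B" "y \<in> B" "codegree V E x y = dB"
  shows "N y = N x"
proof -
  have "N x \<inter> N y = N x"
    using assms card_neighbours_B card_subset_eq[OF finite_neighbours, of "N x \<inter> N y"]
    unfolding codegree_def by (metis Int_lower1)
  then show ?thesis
    using assms card_neighbours_B card_subset_eq[OF finite_neighbours, of "N x" y] by (metis Int_lower2)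
qed

lemma twin_closed_neighbourhood:
  assumes x: "x \<in> B" and twins: "\<And>a y. a \<in> N x \<Longrightarrow> y \<in> N a \<Longrightarrow> N y = N x"
  shows "N x = A"
proof -
  define C where "C = N x \<union> {y \<in> B. N y = N x}"
  have "V \<subseteq> C"
  proof (rule connected_graph_closed_subset[OF connected])
    show "x \<in> V" "x \<in> C" using x V_eq unfolding C_def by auto
    show "v \<in> C" if u: "u \<in> C" and uv: "E u v" for u v
    proof -
      have v: "v \<in> N u" using uv adj_between V_eq neighbours_iff by blast
      show ?thesis
      proof (cases "u \<in> N x")
        case True
        then have "N v = N x" "v \<in> B" using twins v neighbours_A neighbours_B[OF x] by blast+
        then show ?thesis unfolding C_def by blast
      next
        case False
        with u v show ?thesis unfolding C_def by blast
      qed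
    qed
  qed
  then show ?thesis using neighbours_B[OF x] V_eq A_B_disjoint unfolding C_def by blast
qed

lemma sum_card_neighbours_Int:
  assumes "S \<subseteq> B"
  shows "(\<Sum>a\<in>A. card (N a \<inter> S)) = (\<Sum>t\<in>S. card (N t))"
proof -
  have S: "finite S" using finite_subset[OF assms finite_B] .
  have "N a \<inter> S = {t \<in> S. t \<in> N a}" for a by blast
  moreover have "{a \<in> A. t \<in> N a} = N t" if "t \<in> S" for t
    using that assms neighbours_B_eq by blast
  ultimately show ?thesis using sum_card_filter_swap[OF finite_A S] by simp
qed

lemma sum_card_neighbours_Int_squared:
  assumes "S \<subseteq> B"
  shows "(\<Sum>a\<in>A. card (N a \<inter> S) ^ 2) = (\<Sum>t\<in>S. \<Sum>t'\<in>S. codegree V E t t')"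
proof -
  have S: "finite S" using finite_subset[OF assms finite_B] .
  have "card (N a \<inter> S) ^ 2 = card {p \<in> S \<times> S. fst p \<in> N a \<and> snd p \<in> N a}" for a
  proof -
    have "{p \<in> S \<times> S. fst p \<in> N a \<and> snd p \<in> N a} = (N a \<inter> S) \<times> (N a \<inter> S)" by auto
    then show ?thesis by (simp add: power2_eq_square card_cartesian_product)
  qed
  moreover have "{a \<in> A. fst p \<in> N a \<and> snd p \<in> N a} = N (fst p) \<inter> N (snd p)" if "p \<in> S \<times> S" for p
    using that assms neighbours_B_eq[of "fst p"] neighbours_B_eq[of "snd p"] by auto
  ultimately have "(\<Sum>a\<in>A. card (N a \<inter> S) ^ 2) = (\<Sum>p\<in>S \<times> S. codegree V E (fst p) (snd p))"
    using sum_card_filter_swap[OF finite_A finite_cartesian_product[OF S S]]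
    unfolding codegree_def by simp
  then show ?thesis by (simp add: sum.cartesian_product split_def)
qed

end

section \<open>The graph H_{6,10}\<close>

lemma mult_eq_5_nat: "(r::nat) * k = 5 \<Longrightarrow> r = 1 \<and> k = 5 \<or> r = 5 \<and> k = 1"
proof -
  assume rk: "r * k = 5"
  then have "k \<le> r * k" by (cases r) simp_all
  with rk have "k \<le> 5" by simp
  then have "k \<in> {0, 1, 2, 3, 4, 5}" by auto
  with rk show ?thesis by auto presburger+
qed

lemma mult_eq_10_nat: "(r::nat) * k = 10 \<Longrightarrow> r \<le> 5 \<Longrightarrow> k \<le> 5 \<Longrightarrow> r = 2 \<and> k = 5 \<or> r = 5 \<and> k = 2"
proof -
  assume rk: "r * k = 10" "r \<le> 5" "k \<le> 5"
  then have "r \<in> {0, 1, 2, 3, 4, 5}" by auto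
  with rk show ?thesis by auto presburger+
qed

locale H610_parameters = flag_transitive_bipartite +
  assumes dA_eq: "dA = 3" and dB_eq: "dB = 5" and card_A: "card A = 10" and card_B: "card B = 6"
begin

lemma card_neighbours_Diff_singleton:
  assumes "x \<in> B" "a \<in> N x"
  shows "card (N a - {x}) = 2"
proof -
  have "a \<in> A" "x \<in> N a" using assms neighbours_B mem_neighbours_sym V_eq by auto
  then show ?thesis using card_neighbours_A dA_eq finite_neighbours by simp
qed

lemma codegree_self: "t \<in> B \<Longrightarrow> codegree V E t t = 5"
  using card_neighbours_B dB_eq unfolding codegree_def by simp

lemma codegree_le_5: "x \<in> B \<Longrightarrow> codegree V E x y \<le> 5"
  using card_neighbours_B dB_eq card_mono[OF finite_neighbours, of "N x \<inter> N y" x]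
  unfolding codegree_def by auto

lemma exists_codegree_ne_5:
  assumes x: "x \<in> B" and a: "a \<in> N x"
  shows "\<exists>y \<in> N a - {x}. codegree V E x y \<noteq> 5"
proof (rule ccontr)
  assume "\<not> ?thesis"
  then have all: "{y \<in> N a - {x}. codegree V E x y = 5} = N a - {x}" by blast
  have "N y = N x" if a': "a' \<in> N x" and y: "y \<in> N a'" "y \<noteq> x" for a' y
  proof -
    have "card {y \<in> N a' - {x}. codegree V E x y = 5} = card (N a' - {x})"
      using card_codegree_filter_invariant[OF x a' a, where P = "\<lambda>t. t = 5"] all
        card_neighbours_Diff_singleton[OF x a] card_neighbours_Diff_singleton[OF x a'] by simp
    then have "{y \<in> N a' - {x}. codegree V E x y = 5} = N a' - {x}"
      using finite_neighbours by (intro card_subset_eq) auto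
    then have "codegree V E x y = dB" using y dB_eq by blast
    moreover have "y \<in> B" using a' y neighbours_A neighbours_B[OF x] by blast
    ultimately show ?thesis using neighbours_eq_if_codegree_eq[OF x] by simp
  qed
  then have "N x = A" using twin_closed_neighbourhood[OF x] by blast
  then show False using card_neighbours_B[OF x] dB_eq card_A by simp
qed

lemma card_Diff_singleton_5: "x \<in> B \<Longrightarrow> card (B - {x}) = 5"
  using card_B finite_B by simp

lemma codegree_eq_on_neighbours:
  assumes x: "x \<in> B" and a: "a \<in> N x" and y: "y \<in> N a - {x}" "y' \<in> N a - {x}"
  shows "codegree V E x y = codegree V E x y'"
proof (rule ccontr)
  assume ne: "codegree V E x y \<noteq> codegree V E x y'"
  define Y where "Y s = {z \<in> B - {x}. codegree V E x z = s}" for s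
  have Na: "N a - {x} = {y, y'}"
    using card_neighbours_Diff_singleton[OF x a] y ne
    by (metis card_2_iff doubleton_eq_iff insertE singletonD)
  have prod: "codegree V E x z * card (Y (codegree V E x z)) = 5" if "z \<in> {y, y'}" for z
  proof -
    have "{u \<in> N a - {x}. codegree V E x u = codegree V E x z} = {z}"
      using that ne unfolding Na by auto
    then show ?thesis using codegree_count[OF x a] dB_eq unfolding Y_def by simp
  qed
  have fin: "finite (Y s)" for s using finite_B unfolding Y_def by simp
  have "card (Y (codegree V E x y)) + card (Y (codegree V E x y'))
      = card (Y (codegree V E x y) \<union> Y (codegree V E x y'))"
    using ne by (intro card_Un_disjoint[symmetric] fin) (auto simp: Y_def)
  also have "\<dots> \<le> card (B - {x})" using finite_B by (intro card_mono) (auto simp: Y_def)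
  finally have "card (Y (codegree V E x y)) + card (Y (codegree V E x y')) \<le> 5"
    using card_Diff_singleton_5[OF x] by simp
  with mult_eq_5_nat[OF prod[of y]] mult_eq_5_nat[OF prod[of y']] ne show False by auto
qed

lemma codegree_eq_2:
  assumes x: "x \<in> B" and w: "w \<in> B" "w \<noteq> x"
  shows "codegree V E x w = 2"
proof -
  define Y where "Y s = {y \<in> B - {x}. codegree V E x y = s}" for s
  have Y_sub: "Y s \<subseteq> B - {x}" for s unfolding Y_def by blast
  have card_Y: "card (Y s) \<le> 5" for s
    using card_mono[OF _ Y_sub] finite_B card_Diff_singleton_5[OF x] by simp
  obtain a where a: "a \<in> N x"
    using card_neighbours_B[OF x] dB_eq by (metis card.empty equals0I zero_neq_numeral)
  obtain y where y: "y \<in> N a - {x}"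
    using card_neighbours_Diff_singleton[OF x a] by (metis card.empty ex_in_conv zero_neq_numeral)
  define r where "r = codegree V E x y"
  have "{z \<in> N a - {x}. codegree V E x z = r} = N a - {x}"
    using codegree_eq_on_neighbours[OF x a _ y] unfolding r_def by auto
  then have "r * card (Y r) = 10"
    using codegree_count[OF x a] card_neighbours_Diff_singleton[OF x a] dB_eq unfolding Y_def by simp
  moreover have "r \<noteq> 5"
    using exists_codegree_ne_5[OF x a] codegree_eq_on_neighbours[OF x a _ y] unfolding r_def by metis
  ultimately have "card (Y 2) = 5" using mult_eq_10_nat codegree_le_5[OF x] card_Y r_def by metis
  then have "Y 2 = B - {x}" using card_subset_eq[OF _ Y_sub] finite_B card_Diff_singleton_5[OF x] by simp
  with w show ?thesis unfolding Y_def by blast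
qed

lemma neighbours_through_pair:
  assumes a: "a \<in> A" and xy: "x \<in> N a" "y \<in> N a" "x \<noteq> y"
  obtains z where "z \<in> B - {x, y}" "N a = {x, y, z}"
proof -
  have "card (N a - {x, y}) = 1"
    using xy card_neighbours_A[OF a] dA_eq finite_neighbours by (simp add: card_Diff_subset)
  then obtain z where "N a - {x, y} = {z}" by (rule card_1_singletonE)
  with xy neighbours_A[OF a] that show ?thesis by blast
qed

lemma sum_card_neighbourhoods_through_pair:
  assumes x: "x \<in> B" and y: "y \<in> B" "x \<noteq> y"
  shows "(\<Sum>z\<in>B - {x, y}. card {a \<in> A. N a = {x, y, z}}) = 2"
proof -
  have "card (N x \<inter> N y) = card (\<Union>z\<in>B - {x, y}. {a \<in> A. N a = {x, y, z}})"
  proof (intro arg_cong[where f = card] equalityI subsetI)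
    fix a assume a: "a \<in> N x \<inter> N y"
    then have aA: "a \<in> A" using neighbours_B[OF x] by blast
    then have "x \<in> N a" "y \<in> N a" using a x y mem_neighbours_sym V_eq by auto
    then obtain z where "z \<in> B - {x, y}" "N a = {x, y, z}"
      using neighbours_through_pair[OF aA] y(2) by blast
    with aA show "a \<in> (\<Union>z\<in>B - {x, y}. {a \<in> A. N a = {x, y, z}})" by blast
  next
    fix a assume "a \<in> (\<Union>z\<in>B - {x, y}. {a \<in> A. N a = {x, y, z}})"
    then show "a \<in> N x \<inter> N y" using x y mem_neighbours_sym V_eq by auto
  qed
  also have "\<dots> = (\<Sum>z\<in>B - {x, y}. card {a \<in> A. N a = {x, y, z}})"
    by (rule card_UN_disjoint) (use finite_A finite_B in auto)
  finally have "codegree V E x y = (\<Sum>z\<in>B - {x, y}. card {a \<in> A. N a = {x, y, z}})"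
    unfolding codegree_def .
  then show ?thesis using codegree_eq_2[OF x y(1) not_sym[OF y(2)]] by simp
qed

lemma card_neighbours_Int_extremal:
  assumes a: "a \<in> A" and S: "S \<subseteq> B" "card S = 3"
  shows "(int (card (N a \<inter> S)) - 1) * (int (card (N a \<inter> S)) - 2) = (if N a = S \<or> N a = B - S then 2 else 0)"
proof -
  have Na: "N a \<subseteq> B" "card (N a) = 3" using neighbours_A[OF a] card_neighbours_A[OF a] dA_eq by auto
  have fin: "finite S" "finite (B - S)" using finite_subset[OF S(1) finite_B] finite_B by auto
  have "card (N a \<inter> S) \<le> 3" using card_mono[OF fin(1)] S(2) by (metis Int_lower2)
  then have range: "card (N a \<inter> S) \<in> {0, 1, 2, 3}" by auto
  have top: "card (N a \<inter> S) = 3 \<longleftrightarrow> N a = S"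
    using Na S fin card_subset_eq[OF fin(1), of "N a \<inter> S"] card_subset_eq[OF finite_neighbours, of S a]
    by (metis Int_absorb2 Int_lower1 Int_lower2 inf.orderE)
  have bottom: "card (N a \<inter> S) = 0 \<longleftrightarrow> N a = B - S"
  proof -
    have "card (N a \<inter> S) = 0 \<longleftrightarrow> N a \<subseteq> B - S" using Na(1) finite_neighbours by auto
    also have "\<dots> \<longleftrightarrow> N a = B - S"
      using card_subset_eq[OF fin(2)] Na(2) card_Diff_subset[OF fin(1) S(1)] card_B S(2) by auto
    finally show ?thesis .
  qed
  from range consider "card (N a \<inter> S) = 0" | "card (N a \<inter> S) = 1"
    | "card (N a \<inter> S) = 2" | "card (N a \<inter> S) = 3" by auto
  then show ?thesis using top bottom by cases simp_all
qed

lemma sum_card_neighbours_Int_eq_15: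
  assumes S: "S \<subseteq> B" "card S = 3"
  shows "(\<Sum>a\<in>A. card (N a \<inter> S)) = 15"
proof -
  have "(\<Sum>t\<in>S. card (N t)) = 15" using card_neighbours_B S dB_eq by (simp add: subset_iff)
  then show ?thesis using sum_card_neighbours_Int[OF S(1)] by simp
qed

lemma sum_card_neighbours_Int_squared_eq_27:
  assumes S: "S \<subseteq> B" "card S = 3"
  shows "(\<Sum>a\<in>A. card (N a \<inter> S) ^ 2) = 27"
proof -
  have fin: "finite S" using finite_subset[OF S(1) finite_B] .
  have SB: "w \<in> S \<Longrightarrow> w \<in> B" for w using S(1) by blast
  have "(\<Sum>t'\<in>S. codegree V E t t') = 9" if t: "t \<in> S" for t
  proof -
    have "(\<Sum>t'\<in>S. codegree V E t t') = codegree V E t t + (\<Sum>t'\<in>S - {t}. codegree V E t t')"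
      using sum.remove[OF fin t] .
    also have "\<dots> = 5 + (\<Sum>t'\<in>S - {t}. 2)"
      using t by (intro arg_cong2[where f = "(+)"] sum.cong) (auto simp: SB codegree_self codegree_eq_2)
    finally show ?thesis using S(2) fin t by simp
  qed
  then show ?thesis using sum_card_neighbours_Int_squared[OF S(1)] S(2) by simp
qed

lemma card_neighbourhoods_complement:
  assumes S: "S \<subseteq> B" "card S = 3"
  shows "card {a \<in> A. N a = S} + card {a \<in> A. N a = B - S} = 1"
proof -
  define k where "k a = int (card (N a \<inter> S))" for a
  \<comment> \<open>The sum below is \<open>27 - 3 * 15 + 2 * 10 = 2\<close>, and only blocks with \<open>k a \<in> {0, 3}\<close> contribute.\<close>
  have "(\<Sum>a\<in>A. k a ^ 2) - 3 * (\<Sum>a\<in>A. k a) + 2 * int (card A) = (\<Sum>a\<in>A. (k a - 1) * (k a - 2))"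
    by (simp add: algebra_simps power2_eq_square sum.distrib sum_subtractf sum_distrib_left sum_distrib_right)
  also have "\<dots> = (\<Sum>a\<in>A. if N a = S \<or> N a = B - S then 2 else 0)"
    using card_neighbours_Int_extremal[OF _ S] unfolding k_def by simp
  also have "\<dots> = 2 * int (card {a \<in> A. N a = S \<or> N a = B - S})"
    using finite_A by (simp add: sum.If_cases Int_def)
  finally have "card {a \<in> A. N a = S \<or> N a = B - S} = 1"
    using sum_card_neighbours_Int_eq_15[OF S] sum_card_neighbours_Int_squared_eq_27[OF S] card_A
    unfolding k_def by (simp flip: of_nat_sum of_nat_power)
  moreover have "{a \<in> A. N a = S \<or> N a = B - S} = {a \<in> A. N a = S} \<union> {a \<in> A. N a = B - S}" by blast
  moreover have "S \<noteq> {}" using S(2) by auto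
  then have "{a \<in> A. N a = S} \<inter> {a \<in> A. N a = B - S} = {}" by blast
  ultimately show ?thesis using finite_A card_Un_disjoint by (metis (no_types, lifting) finite_subset mem_Collect_eq subsetI)
qed

end

lemma atLeast0LessThan_6: "{0..<6::nat} = {0, 1, 2, 3, 4, 5}"
  by (auto simp: less_Suc_eq numeral_eq_Suc)

definition H610_block :: "nat \<Rightarrow> nat set" where
  "H610_block j = {i. i < 6 \<and> j \<in> H610_nbr i}"

lemma H610_block_values:
  "H610_block 6 = {0, 2, 3}" "H610_block 7 = {1, 3, 5}" "H610_block 8 = {0, 2, 5}"
  "H610_block 9 = {0, 1, 4}" "H610_block 10 = {0, 1, 3}" "H610_block 11 = {2, 3, 4}"
  "H610_block 12 = {1, 2, 4}" "H610_block 13 = {1, 2, 5}" "H610_block 14 = {3, 4, 5}"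
  "H610_block 15 = {0, 4, 5}"
  unfolding H610_block_def H610_nbr_def by auto

lemma H610_blocks:
  "H610_block ` {6..<16} = {{0, 2, 3}, {1, 3, 5}, {0, 2, 5}, {0, 1, 4}, {0, 1, 3}, {2, 3, 4},
     {1, 2, 4}, {1, 2, 5}, {3, 4, 5}, {0, 4, 5}}"
proof -
  have "{6..<16::nat} = {6, 7, 8, 9, 10, 11, 12, 13, 14, 15}"
    by (auto simp: less_Suc_eq numeral_eq_Suc)
  then show ?thesis by (simp add: H610_block_values)
qed

lemma inj_on_H610_block: "inj_on H610_block {6..<16}"
proof -
  \<comment> \<open>The binary codes of the ten blocks are distinct numbers, which \<open>simp\<close> can compare.\<close>
  have "inj_on (\<lambda>j. \<Sum>i\<in>H610_block j. 2 ^ i :: nat) {6..<16}"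
    by (simp add: inj_on_def H610_block_values flip: set_upt add: upt_rec)
  then show ?thesis by (rule inj_on_imageI2[where f' = "\<lambda>S. \<Sum>i\<in>S. 2 ^ i", unfolded comp_def])
qed

lemma H610_block_subset: "H610_block j \<subseteq> {0..<6}"
  unfolding H610_block_def by auto

lemma H610_E_iff: "6 \<le> j \<Longrightarrow> i < 6 \<Longrightarrow> H610_E j i \<longleftrightarrow> i \<in> H610_block j"
  unfolding H610_E_def H610_block_def by auto

lemma bipartition_H610: "bipartition H610_V H610_E {6..<16} {0..<6}"
proof -
  have "6 \<le> v \<and> v < 16" if "v \<in> H610_nbr i" for v i
    using that unfolding H610_nbr_def by (auto split: if_splits)
  then show ?thesis unfolding bipartition_def H610_V_def H610_E_def by fastforce
qed

lemma symp_H610: "symp H610_E"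
  unfolding symp_def H610_E_def by auto

locale design_6_3_2 =
  fixes c :: "nat set \<Rightarrow> nat"
  assumes pair: "\<And>i j. i < 6 \<Longrightarrow> j < 6 \<Longrightarrow> i \<noteq> j \<Longrightarrow> (\<Sum>k\<in>{0..<6} - {i, j}. c {i, j, k}) = 2"
    and complement: "\<And>T. T \<subseteq> {0..<6} \<Longrightarrow> card T = 3 \<Longrightarrow> c T + c ({0..<6} - T) = 1"
begin

lemma design_branch:
  assumes c013: "1 \<le> c {0, 1, 3}" and c014: "1 \<le> c {0, 1, 4}"
  shows "c {0, 2, 4} + c {0, 4, 5} = 1"
proof -
  have "c {0, 1, 2} + c {0, 1, 3} + c {0, 1, 4} + c {0, 1, 5} = 2"
    using pair[of 0 1] by (simp add: atLeast0LessThan_6 insert_Diff_if insert_commute)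
  moreover have "c {0, 3, 4} + c {1, 3, 4} + c {2, 3, 4} + c {3, 4, 5} = 2"
    using pair[of 3 4] by (simp add: atLeast0LessThan_6 insert_Diff_if insert_commute)
  moreover have "c {0, 1, 4} + c {0, 2, 4} + c {0, 3, 4} + c {0, 4, 5} = 2"
    using pair[of 0 4] by (simp add: atLeast0LessThan_6 insert_Diff_if insert_commute)
  moreover have "c {0, 1, 5} + c {2, 3, 4} = 1" "c {0, 1, 2} + c {3, 4, 5} = 1"
    using complement[of "{0, 1, 5}"] complement[of "{0, 1, 2}"]
    by (simp_all add: atLeast0LessThan_6 insert_Diff_if insert_commute)
  ultimately show ?thesis using c013 c014 by linarith
qed

lemma design_H610:
  assumes c013: "1 \<le> c {0, 1, 3}" and c014: "1 \<le> c {0, 1, 4}" and c045: "1 \<le> c {0, 4, 5}"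
  shows "T \<in> H610_block ` {6..<16} \<Longrightarrow> 1 \<le> c T"
proof -
  have "c {0, 1, 2} + c {0, 1, 3} + c {0, 1, 4} + c {0, 1, 5} = 2"
    "c {0, 3, 4} + c {1, 3, 4} + c {2, 3, 4} + c {3, 4, 5} = 2"
    "c {0, 1, 4} + c {0, 2, 4} + c {0, 3, 4} + c {0, 4, 5} = 2"
    "c {0, 1, 5} + c {0, 2, 5} + c {0, 3, 5} + c {0, 4, 5} = 2"
    "c {0, 1, 2} + c {0, 2, 3} + c {0, 2, 4} + c {0, 2, 5} = 2"
    using pair[of 0 1] pair[of 3 4] pair[of 0 4] pair[of 0 5] pair[of 0 2]
    by (simp_all add: atLeast0LessThan_6 insert_Diff_if insert_commute)
  moreover have "c {0, 1, 5} + c {2, 3, 4} = 1" "c {0, 1, 2} + c {3, 4, 5} = 1"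
    "c {0, 3, 4} + c {1, 2, 5} = 1" "c {1, 3, 4} + c {0, 2, 5} = 1"
    "c {0, 2, 4} + c {1, 3, 5} = 1" "c {0, 3, 5} + c {1, 2, 4} = 1"
    using complement[of "{0, 1, 5}"] complement[of "{0, 1, 2}"] complement[of "{0, 3, 4}"]
      complement[of "{1, 3, 4}"] complement[of "{0, 2, 4}"] complement[of "{0, 3, 5}"]
    by (simp_all add: atLeast0LessThan_6 insert_Diff_if insert_commute)
  ultimately have "1 \<le> c {0, 2, 3}" "1 \<le> c {1, 3, 5}" "1 \<le> c {0, 2, 5}" "1 \<le> c {2, 3, 4}"
    "1 \<le> c {1, 2, 4}" "1 \<le> c {1, 2, 5}" "1 \<le> c {3, 4, 5}"
    using c013 c014 c045 by linarith+
  with c013 c014 c045 show "T \<in> H610_block ` {6..<16} \<Longrightarrow> 1 \<le> c T"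
    unfolding H610_blocks by auto
qed

end

context H610_parameters
begin

definition block_count :: "(nat \<Rightarrow> 'a) \<Rightarrow> nat set \<Rightarrow> nat" where
  "block_count pt T = card {a \<in> A. N a = pt ` T}"

lemma block_count_pair:
  assumes pt: "bij_betw pt {0..<6} B" and ij: "i < 6" "j < 6" "i \<noteq> j"
  shows "(\<Sum>k\<in>{0..<6} - {i, j}. block_count pt {i, j, k}) = 2"
proof -
  have inj: "inj_on pt {0..<6}" using pt by (rule bij_betw_imp_inj_on)
  have ptij: "pt i \<in> B" "pt j \<in> B" "pt i \<noteq> pt j"
    using ij bij_betw_apply[OF pt] inj_onD[OF inj] by auto
  have img: "pt ` ({0..<6} - {i, j}) = B - {pt i, pt j}"
    using inj_on_image_set_diff[OF inj, of "{0..<6}" "{i, j}"] ij bij_betw_imp_surj_on[OF pt] by auto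
  have "(\<Sum>k\<in>{0..<6} - {i, j}. block_count pt {i, j, k})
      = (\<Sum>k\<in>{0..<6} - {i, j}. card {a \<in> A. N a = {pt i, pt j, pt k}})"
    by (simp add: block_count_def)
  also have "\<dots> = (\<Sum>z\<in>B - {pt i, pt j}. card {a \<in> A. N a = {pt i, pt j, z}})"
    unfolding img[symmetric] by (rule sum.reindex[OF inj_on_subset[OF inj], symmetric, unfolded comp_def]) auto
  also have "\<dots> = 2" using sum_card_neighbourhoods_through_pair ptij by blast
  finally show ?thesis .
qed

lemma block_count_complement:
  assumes pt: "bij_betw pt {0..<6} B" and T: "T \<subseteq> {0..<6}" "card T = 3"
  shows "block_count pt T + block_count pt ({0..<6} - T) = 1"
proof -
  have inj: "inj_on pt {0..<6}" using pt by (rule bij_betw_imp_inj_on)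
  have "pt ` ({0..<6} - T) = B - pt ` T"
    using inj_on_image_set_diff[OF inj Diff_subset T(1)] bij_betw_imp_surj_on[OF pt] by simp
  moreover have "pt ` T \<subseteq> B" "card (pt ` T) = 3"
    using T bij_betw_imp_surj_on[OF pt] card_image[OF inj_on_subset[OF inj T(1)]] by auto
  ultimately show ?thesis using card_neighbourhoods_complement unfolding block_count_def by simp
qed

lemma block_count_pos_iff: "1 \<le> block_count pt T \<longleftrightarrow> pt ` T \<in> N ` A"
  using finite_A unfolding block_count_def by (auto simp: Suc_le_eq card_gt_0_iff)

lemma design_6_3_2_block_count: "bij_betw pt {0..<6} B \<Longrightarrow> design_6_3_2 (block_count pt)"
  by unfold_locales (simp_all add: block_count_pair block_count_complement)

lemma two_blocks_through_pair:
  obtains x y u q p v where "distinct [x, y, u, q, p, v]" "set [x, y, u, q, p, v] = B"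
    "{x, y, q} \<in> N ` A" "{x, y, p} \<in> N ` A"
proof -
  have "\<not> card B \<le> Suc 0" using card_B by simp
  then obtain x y where xy: "x \<in> B" "y \<in> B" "x \<noteq> y"
    using card_le_Suc0_iff_eq[OF finite_B] by blast
  have "card (N x \<inter> N y) = 2" using codegree_eq_2[OF xy(1,2)] xy(3) unfolding codegree_def by simp
  then obtain a1 a2 where a12: "N x \<inter> N y = {a1, a2}" "a1 \<noteq> a2" by (meson card_2_iff)
  have block: "a \<in> A \<and> x \<in> N a \<and> y \<in> N a" if "a \<in> {a1, a2}" for a
    using that a12 neighbours_B[OF xy(1)] mem_neighbours_sym xy V_eq by blast
  obtain p where p: "p \<in> B - {x, y}" "N a1 = {x, y, p}"
    using block[of a1] xy(3) neighbours_through_pair by blast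
  obtain q where q: "q \<in> B - {x, y}" "N a2 = {x, y, q}"
    using block[of a2] xy(3) neighbours_through_pair by blast
  have "p \<noteq> q"
  proof
    assume "p = q"
    then have "{a1, a2} \<subseteq> {a \<in> A. N a = {x, y, p}}" using p q block by auto
    then have "2 \<le> card {a \<in> A. N a = {x, y, p}}"
      using a12(2) card_mono[OF _ \<open>{a1, a2} \<subseteq> _\<close>] finite_A by fastforce
    moreover have "{x, y, p} \<subseteq> B" "card {x, y, p} = 3" using xy p by auto
    then have "card {a \<in> A. N a = {x, y, p}} \<le> 1"
      using card_neighbourhoods_complement[of "{x, y, p}"] by linarith
    ultimately show False by simp
  qed
  have "card {x, y, p, q} = 4" using xy p q \<open>p \<noteq> q\<close> by (auto simp: card_insert_if)
  then have "card (B - {x, y, p, q}) = 2"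
    using xy p q card_B finite_B by (simp add: card_Diff_subset)
  then obtain u v where uv: "B - {x, y, p, q} = {u, v}" "u \<noteq> v" by (meson card_2_iff)
  show ?thesis
  proof (rule that)
    show "distinct [x, y, u, q, p, v]" using xy p q uv \<open>p \<noteq> q\<close> by auto
    show "set [x, y, u, q, p, v] = B" using xy p q uv by auto
  qed (use p q block in auto)
qed

lemma H610_labelling:
  obtains pt where "bij_betw pt {0..<6} B" "\<And>T. T \<in> H610_block ` {6..<16} \<Longrightarrow> 1 \<le> block_count pt T"
proof -
  obtain x y u q p v where frame: "distinct [x, y, u, q, p, v]" "set [x, y, u, q, p, v] = B"
    "{x, y, q} \<in> N ` A" "{x, y, p} \<in> N ` A"
    by (rule two_blocks_through_pair)
  \<comment> \<open>The labels 0, 1, 3, 4 of x, y, q, p match the blocks {0, 1, 3} and {0, 1, 4} of H_{6,10};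
    u and v are labelled 2 and 5 in the order that makes {0, 4, 5} a block as well.\<close>
  define pt1 pt2 where "pt1 = (!) [x, y, u, q, p, v]" and "pt2 = (!) [x, y, v, q, p, u]"
  have bij: "bij_betw pt {0..<6} B" if "pt \<in> {pt1, pt2}" for pt
    using that frame(1,2) unfolding pt1_def pt2_def
    by (auto intro!: bij_betw_nth simp: atLeast0LessThan insert_commute)
  have counts: "1 \<le> block_count pt {0, 1, 3}" "1 \<le> block_count pt {0, 1, 4}"
    if "pt \<in> {pt1, pt2}" for pt
    unfolding block_count_pos_iff using that frame(3,4) by (auto simp: pt1_def pt2_def)
  note design = design_6_3_2_block_count[OF bij]
  have "block_count pt1 {0, 2, 4} + block_count pt1 {0, 4, 5} = 1"
    using design_6_3_2.design_branch[OF design counts] by blast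
  moreover have "block_count pt2 {0, 4, 5} = block_count pt1 {0, 2, 4}"
    unfolding block_count_def pt1_def pt2_def by (simp add: insert_commute)
  ultimately have "1 \<le> block_count pt1 {0, 4, 5} \<or> 1 \<le> block_count pt2 {0, 4, 5}" by linarith
  then obtain pt where pt: "pt \<in> {pt1, pt2}" "1 \<le> block_count pt {0, 4, 5}" by blast
  show ?thesis
    using that[OF bij[OF pt(1)]] design_6_3_2.design_H610[OF design[OF pt(1)] counts[OF pt(1)] pt(2)]
    by blast
qed

lemma graph_iso_H610_of_labelling:
  assumes pt: "bij_betw pt {0..<6} B" and blocks: "\<And>T. T \<in> H610_block ` {6..<16} \<Longrightarrow> 1 \<le> block_count pt T"
  shows "graph_iso V E H610_V H610_E"
proof -
  have inj: "inj_on pt {0..<6}" using pt by (rule bij_betw_imp_inj_on)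
  have "\<exists>a. a \<in> A \<and> N a = pt ` H610_block j" if "j \<in> {6..<16}" for j
    using blocks[of "H610_block j", unfolded block_count_pos_iff] that by auto
  then obtain g where g: "\<And>j. j \<in> {6..<16} \<Longrightarrow> g j \<in> A \<and> N (g j) = pt ` H610_block j" by metis
  have "inj_on g {6..<16}"
  proof (rule inj_onI)
    fix j j' assume j: "j \<in> {6..<16}" "j' \<in> {6..<16}" and "g j = g j'"
    then have "pt ` H610_block j = pt ` H610_block j'" using g by metis
    then have "H610_block j = H610_block j'"
      using inj_on_image_eq_iff[OF inj H610_block_subset H610_block_subset] by blast
    then show "j = j'" using inj_on_H610_block j by (meson inj_onD)
  qed
  moreover have "g ` {6..<16} = A"
  proof (rule card_subset_eq[OF finite_A])
    show "g ` {6..<16} \<subseteq> A" using g by blast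
    show "card (g ` {6..<16}) = card A" using card_image[OF \<open>inj_on g {6..<16}\<close>] card_A by simp
  qed
  ultimately have g_bij: "bij_betw g {6..<16} A" unfolding bij_betw_def by blast
  have "E (g j) (pt i) \<longleftrightarrow> H610_E j i" if "j \<in> {6..<16}" "i \<in> {0..<6}" for j i
  proof -
    have "E (g j) (pt i) \<longleftrightarrow> pt i \<in> N (g j)" using that bij_betw_apply[OF pt] V_eq neighbours_iff by blast
    also have "\<dots> \<longleftrightarrow> i \<in> H610_block j"
      using g that inj_on_image_mem_iff[OF inj _ H610_block_subset] by simp
    finally show ?thesis using H610_E_iff that by simp
  qed
  moreover have "symp E" using adj_sym by (simp add: sympI)
  ultimately show ?thesis
    using graph_iso_of_bipartitions[OF bipartition _ bipartition_H610 symp_H610 g_bij pt] by blast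
qed

lemma graph_iso_H610: "graph_iso V E H610_V H610_E"
  using H610_labelling graph_iso_H610_of_labelling by metis

end

context flag_transitive_bipartite
begin

lemma graph_iso_H610_if_parameters:
  assumes "dA = 3" "dB = 5" "card A = 10" "card B = 6"
  shows "graph_iso V E H610_V H610_E"
proof -
  interpret H610_parameters V E A B dA dB by unfold_locales (use assms in auto)
  show ?thesis by (rule graph_iso_H610)
qed

end

theorem lemma3p4:
  fixes V :: "'a set" and E :: "'a \<Rightarrow> 'a \<Rightarrow> bool"
  assumes "simple_graph V E"
    and "connected_graph V E"
    and "edge_transitive V E"
    and "\<not> vertex_transitive V E"
  shows "((min_degree V E \<ge> 4 \<or> (min_degree V E = 3 \<and> max_degree V E \<ge> 6))
           \<longrightarrow> int (card (edges V E)) > 2 * int (card V) - 3)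
     \<and> ((min_degree V E \<le> 3 \<and> max_degree V E \<le> 5)
           \<longrightarrow> int (card (edges V E)) \<le> 2 * int (card V) - 3
               \<or> graph_iso V E (K_bip_V 3 4) (K_bip_E 3 4)
               \<or> graph_iso V E (K_bip_V 3 5) (K_bip_E 3 5)
               \<or> graph_iso V E H610_V H610_E)"
proof -
  obtain A B dA dB where "flag_transitive_bipartite V E A B dA dB" and le: "dA \<le> dB"
    using flag_transitive_bipartite_exists[OF assms] by blast
  then interpret flag_transitive_bipartite V E A B dA dB by simp
  have degrees: "min_degree V E = dA" "max_degree V E = dB"
    using min_degree_eq max_degree_eq le by simp_all
  note counts = card_edges card_V double_count_edges
  show ?thesis
  proof (intro conjI impI)
    assume "4 \<le> min_degree V E \<or> min_degree V E = 3 \<and> 6 \<le> max_degree V E"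
    then show "2 * int (card V) - 3 < int (card (edges V E))"
      using dense_biregular_edge_count[OF double_count_edges le] degrees counts by simp
  next
    assume "min_degree V E \<le> 3 \<and> max_degree V E \<le> 5"
    then have "int (card A * dA) \<le> 2 * int (card A + card B) - 3
      \<or> (dA, dB, card A, card B) \<in> {(3, 4, 4, 3), (3, 5, 5, 3), (3, 5, 10, 6)}"
      using sparse_biregular_edge_count[OF double_count_edges dA_pos le _ _ dA_le_card_B dB_le_card_A]
        degrees by simp
    then show "int (card (edges V E)) \<le> 2 * int (card V) - 3
               \<or> graph_iso V E (K_bip_V 3 4) (K_bip_E 3 4)
               \<or> graph_iso V E (K_bip_V 3 5) (K_bip_E 3 5)
               \<or> graph_iso V E H610_V H610_E"
      using complete_bipartite_iso graph_iso_H610_if_parameters counts by auto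
  qed
qed

end
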